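(* Let $p$ be an odd prime, let $n$ be the multiplicative order of $2$ modulo $p$, and let $e$ be the multiplicative order of $p$ modulo $3n$. Suppose that $e>1$. Set $q=p^a$ where $a\not\equiv 0\pmod e$, and suppose further that $q\equiv 1\pmod 6$. Then for any primitive element $\rho$ of $\mathbb F_q$, the cyclotomic number $c^3_q(1,2)$ is odd.
   Context: Write $q=6r+1$; for $i\in\mathbb Z_3$, $C^3_q(i)=\{\rho^{3j+i}: 0\le j\le 2r-1\}$, and $c^3_q(a,b)=|(C^3_q(a)+1)\cap C^3_q(b)|$ for $a,b\in\mathbb Z_3$. *)

theory Defs
  imports "HOL-Number_Theory.Number_Theory" "HOL-Library.Cardinality"
begin

definition primitive_element :: "'a::{finite,field} \<Rightarrow> bool" where
  "primitive_element \<rho> \<longleftrightarrow> \<rho> \<noteq> 0 \<and> (\<forall>x. x \<noteq> 0 \<longrightarrow> (\<exists>k::nat. x = \<rho> ^ k))"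

definition cyc_class3 :: "'a::{finite,field} \<Rightarrow> nat \<Rightarrow> 'a set" where
  "cyc_class3 \<rho> i = {\<rho> ^ (3 * j + i) | j. j < 2 * ((CARD('a) - 1) div 6)}"

definition cyc_num3 :: "'a::{finite,field} \<Rightarrow> nat \<Rightarrow> nat \<Rightarrow> nat" where
  "cyc_num3 \<rho> a b = card ((\<lambda>x. x + 1) ` cyc_class3 \<rho> a \<inter> cyc_class3 \<rho> b)"

end

theory Submission
  imports Defs
begin

text \<open>
  Write \<open>S i j = {x \<in> C i. x + 1 \<in> C j}\<close>, so that \<open>c(i,j) = |S i j|\<close>. Since \<open>-1\<close> is a cube,
  \<open>x \<mapsto> -1 - x\<close> maps \<open>S i j\<close> onto \<open>S j i\<close> and \<open>x \<mapsto> 1/x\<close> maps \<open>S 1 1\<close> onto \<open>S 2 0\<close>.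
  Counting the elements of \<open>C 0 - {-1}\<close> and of \<open>C 1\<close> by the class of their successor then gives
  \<open>c(1,2) = c(0,0) + 1\<close>. The involution \<open>x \<mapsto> -1 - x\<close> of \<open>S 0 0\<close> has no fixed point
  unless \<open>-1/2\<close>, equivalently \<open>2\<close>, is a cube, so \<open>c(0,0)\<close> is even when \<open>2\<close> is not a cube.
  Finally, if \<open>2\<close> were a cube then \<open>2^((q-1)/3) = 1\<close> in \<open>\<bbbF>\<^sub>p\<close>, hence \<open>3n\<close> divides
  \<open>q - 1 = p^a - 1\<close> and \<open>e\<close> divides \<open>a\<close>.
\<close>

lemma even_card_if_fixpoint_free_involution:
  assumes "finite A" "\<forall>x\<in>A. g x \<in> A \<and> g (g x) = x \<and> g x \<noteq> x"
  shows "even (card A)"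
  using assms
proof (induction "card A" arbitrary: A rule: less_induct)
  case less
  show ?case
  proof (cases "A = {}")
    case False
    then obtain x where x: "x \<in> A" by blast
    have gx: "g x \<in> A" "g x \<noteq> x" using less.prems x by auto
    define A' where "A' = A - {x, g x}"
    have "card {x, g x} \<le> card A" using less.prems(1) x gx by (intro card_mono) auto
    then have card_A: "card A = card A' + 2"
      using less.prems(1) x gx unfolding A'_def by (simp add: card_Diff_subset)
    have "\<forall>y\<in>A'. g y \<in> A' \<and> g (g y) = y \<and> g y \<noteq> y"
    proof
      fix y assume "y \<in> A'"
      then have y: "y \<in> A" "y \<noteq> x" "y \<noteq> g x" unfolding A'_def by auto
      have "g (g y) = y" "g (g x) = x" using less.prems(2) x y(1) by auto
      then have "g y \<noteq> x" "g y \<noteq> g x" using y(2,3) by auto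
      then show "g y \<in> A' \<and> g (g y) = y \<and> g y \<noteq> y"
        using less.prems(2) y(1) unfolding A'_def by auto
    qed
    then have "even (card A')"
      using less.hyps[of A'] less.prems(1) card_A unfolding A'_def by simp
    then show ?thesis using card_A by simp
  qed simp
qed

lemma card_eq_if_involution_swaps:
  assumes "f ` A \<subseteq> B" "f ` B \<subseteq> A" "\<And>x. f (f x) = x"
  shows "card A = card B"
  by (rule bij_betw_same_card, rule bij_betw_byWitness[where f' = f]) (use assms in auto)

lemma power_CARD_minus_one:
  fixes x :: "'a::{finite,field}"
  assumes "x \<noteq> 0"
  shows "x ^ (CARD('a) - 1) = 1"
proof -
  let ?U = "UNIV - {0::'a}"
  have "\<Prod>?U = (\<Prod>y\<in>?U. x * y)"
    by (rule prod.reindex_bij_witness[of _ "\<lambda>y. x * y" "\<lambda>y. y / x"]) (use assms in auto)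
  also have "\<dots> = x ^ card ?U * \<Prod>?U"
    by (simp add: prod.distrib)
  also have "card ?U = CARD('a) - 1"
    by (simp add: card_Diff_singleton)
  finally have "1 * \<Prod>?U = x ^ (CARD('a) - 1) * \<Prod>?U"
    by simp
  moreover have "\<Prod>?U \<noteq> 0" by simp
  ultimately show ?thesis by (metis mult_cancel_right)
qed

lemma one_less_CARD_field: "1 < CARD('a::{finite,field})"
proof -
  have "card {0::'a, 1} \<le> CARD('a)" by (rule card_mono) auto
  then show ?thesis by simp
qed

lemma CHAR_eq_if_CARD_eq_prime_power:
  assumes "prime p" "CARD('a::{finite,field}) = p ^ a"
  shows "CHAR('a) = p"
proof -
  have prime_char: "prime CHAR('a)"
    by (rule prime_CHAR_semidom, rule finite_imp_CHAR_pos) simp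
  then have "CHAR('a) dvd p"
    using CHAR_dvd_CARD[where 'a='a] assms(2) prime_dvd_power by metis
  then show ?thesis by (rule primes_dvd_imp_eq[OF prime_char assms(1)])
qed

locale cubic_classes =
  fixes \<rho> :: "'a::{finite,field}" and r :: nat
  assumes primitive: "primitive_element \<rho>" and CARD_eq: "CARD('a) = 6 * r + 1"
begin

abbreviation C :: "nat \<Rightarrow> 'a set" where "C \<equiv> cyc_class3 \<rho>"

lemma class_eq: "C i = {\<rho> ^ (3 * j + i) | j. j < 2 * r}"
  unfolding cyc_class3_def CARD_eq by simp

lemma rho_nonzero: "\<rho> \<noteq> 0"
  using primitive by (simp add: primitive_element_def)

lemma r_pos: "r > 0"
  using one_less_CARD_field[where 'a='a] CARD_eq by simp

lemma rho_power_mod: "\<rho> ^ k = \<rho> ^ (k mod (6 * r))"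
proof -
  have "\<rho> ^ k = (\<rho> ^ (6 * r)) ^ (k div (6 * r)) * \<rho> ^ (k mod (6 * r))"
    by (metis div_mult_mod_eq mult.commute power_add power_mult)
  then show ?thesis using power_CARD_minus_one[OF rho_nonzero] CARD_eq by simp
qed

lemma inj_on_rho_power: "inj_on (\<lambda>k. \<rho> ^ k) {..<6 * r}"
proof (rule eq_card_imp_inj_on)
  have "(\<lambda>k. \<rho> ^ k) ` {..<6 * r} = UNIV - {0}"
  proof
    show "UNIV - {0} \<subseteq> (\<lambda>k. \<rho> ^ k) ` {..<6 * r}"
    proof
      fix x :: 'a assume "x \<in> UNIV - {0}"
      then obtain k where "x = \<rho> ^ k"
        using primitive unfolding primitive_element_def by auto
      then have "x = \<rho> ^ (k mod (6 * r))" using rho_power_mod[of k] by simp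
      moreover have "k mod (6 * r) < 6 * r" using r_pos by simp
      ultimately show "x \<in> (\<lambda>k. \<rho> ^ k) ` {..<6 * r}" by blast
    qed
  qed (use rho_nonzero in auto)
  then show "card ((\<lambda>k. \<rho> ^ k) ` {..<6 * r}) = card {..<6 * r}"
    by (simp add: card_Diff_singleton CARD_eq)
qed simp

lemma rho_power_eq_iff: "\<rho> ^ k = \<rho> ^ l \<longleftrightarrow> k mod (6 * r) = l mod (6 * r)"
proof -
  have "\<rho> ^ k = \<rho> ^ l \<longleftrightarrow> \<rho> ^ (k mod (6 * r)) = \<rho> ^ (l mod (6 * r))"
    using rho_power_mod[of k] rho_power_mod[of l] by simp
  also have "\<dots> \<longleftrightarrow> k mod (6 * r) = l mod (6 * r)"
    using r_pos by (intro inj_on_eq_iff[OF inj_on_rho_power]) simp_all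
  finally show ?thesis .
qed

lemma rho_power_eq_imp_mod3: "\<rho> ^ k = \<rho> ^ l \<Longrightarrow> k mod 3 = l mod 3"
proof -
  assume "\<rho> ^ k = \<rho> ^ l"
  then have "k mod (6 * r) mod 3 = l mod (6 * r) mod 3"
    by (simp add: rho_power_eq_iff)
  moreover have "(3::nat) dvd 6 * r" by simp
  ultimately show ?thesis by (simp only: mod_mod_cancel)
qed

lemma mem_class_iff:
  assumes "i < 3"
  shows "x \<in> C i \<longleftrightarrow> (\<exists>k. x = \<rho> ^ k \<and> k mod 3 = i)"
proof
  assume "x \<in> C i"
  then obtain j where "x = \<rho> ^ (3 * j + i)" unfolding class_eq by auto
  then show "\<exists>k. x = \<rho> ^ k \<and> k mod 3 = i" using assms by (intro exI[of _ "3 * j + i"]) simp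
next
  assume "\<exists>k. x = \<rho> ^ k \<and> k mod 3 = i"
  then obtain k where k: "x = \<rho> ^ k" "k mod 3 = i" by blast
  define j where "j = k mod (6 * r) div 3"
  have "k mod (6 * r) mod 3 = i"
    using k(2) by (simp add: mod_mod_cancel)
  then have kj: "k mod (6 * r) = 3 * j + i"
    using div_mult_mod_eq[of "k mod (6 * r)" 3] unfolding j_def by simp
  moreover have "k mod (6 * r) < 6 * r" using r_pos by simp
  ultimately have "j < 2 * r" by linarith
  moreover have "x = \<rho> ^ (3 * j + i)" using k(1) rho_power_mod[of k] kj by simp
  ultimately show "x \<in> C i" unfolding class_eq by blast
qed

lemma class_nonzero: "x \<in> C i \<Longrightarrow> x \<noteq> 0"
  using rho_nonzero unfolding class_eq by auto

lemma class_exists: "x \<noteq> 0 \<Longrightarrow> \<exists>i<3. x \<in> C i"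
  using primitive mem_class_iff unfolding primitive_element_def
  by (metis mod_less_divisor zero_less_numeral)

lemma class_unique: "i < 3 \<Longrightarrow> j < 3 \<Longrightarrow> x \<in> C i \<Longrightarrow> x \<in> C j \<Longrightarrow> i = j"
  using mem_class_iff rho_power_eq_imp_mod3 by metis

lemma class_mult:
  assumes "i < 3" "j < 3" "x \<in> C i" "y \<in> C j"
  shows "x * y \<in> C ((i + j) mod 3)"
proof -
  obtain k l where "x = \<rho> ^ k" "k mod 3 = i" "y = \<rho> ^ l" "l mod 3 = j"
    using assms mem_class_iff by metis
  then have "x * y = \<rho> ^ (k + l) \<and> (k + l) mod 3 = (i + j) mod 3"
    by (auto simp: power_add mod_add_eq)
  then show ?thesis using mem_class_iff[of "(i + j) mod 3"] by auto
qed

lemma one_in_class0: "1 \<in> C 0"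
proof -
  have "\<exists>k. (1::'a) = \<rho> ^ k \<and> k mod 3 = 0" by (rule exI[of _ 0]) simp
  then show ?thesis by (subst mem_class_iff) simp_all
qed

lemma class_inverse:
  assumes "i < 3" "x \<in> C i"
  shows "inverse x \<in> C ((3 - i) mod 3)"
proof -
  have "x \<noteq> 0" using assms(2) class_nonzero by blast
  then obtain j where j: "j < 3" "inverse x \<in> C j" using class_exists[of "inverse x"] by auto
  have "1 \<in> C ((i + j) mod 3)"
    using class_mult[OF assms(1) j(1) assms(2) j(2)] \<open>x \<noteq> 0\<close> by simp
  then have "(i + j) mod 3 = 0" using class_unique[OF _ _ _ one_in_class0] by simp
  moreover have "i = 0 \<or> i = 1 \<or> i = 2" "j = 0 \<or> j = 1 \<or> j = 2" using assms(1) j(1) by auto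
  ultimately have "j = (3 - i) mod 3" by (elim disjE) simp_all
  then show ?thesis using j(2) by simp
qed

lemma minus_one_in_class0: "-1 \<in> C 0"
proof -
  have "(-1::'a) \<noteq> 0" by simp
  then obtain k where k: "-1 = \<rho> ^ k"
    using primitive unfolding primitive_element_def by blast
  have "\<rho> ^ (2 * k) = (-1) ^ 2" unfolding k by (simp add: power_mult[symmetric] mult.commute)
  then have "\<rho> ^ (2 * k) = \<rho> ^ 0" by simp
  then have "2 * k mod (6 * r) = 0" by (simp only: rho_power_eq_iff mod_0)
  then have "6 * r dvd 2 * k" by (rule mod_0_imp_dvd)
  then have "6 dvd 2 * k" by (rule dvd_mult_left)
  then have "k mod 3 = 0" by presburger
  then show ?thesis using mem_class_iff[of 0] k by auto
qed

lemma class_uminus: "i < 3 \<Longrightarrow> x \<in> C i \<Longrightarrow> - x \<in> C i"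
  using class_mult[OF _ _ minus_one_in_class0, of i x] by simp

lemma card_class: "i < 3 \<Longrightarrow> card (C i) = 2 * r"
proof -
  assume "i < 3"
  have "inj_on (\<lambda>j. \<rho> ^ (3 * j + i)) {..<2 * r}"
  proof (rule inj_onI)
    fix u v assume "u \<in> {..<2 * r}" "v \<in> {..<2 * r}" "\<rho> ^ (3 * u + i) = \<rho> ^ (3 * v + i)"
    moreover from this(1,2) have "3 * u + i < 6 * r" "3 * v + i < 6 * r"
      using \<open>i < 3\<close> by auto
    ultimately show "u = v" by (simp add: rho_power_eq_iff)
  qed
  moreover have "C i = (\<lambda>j. \<rho> ^ (3 * j + i)) ` {..<2 * r}"
    unfolding class_eq by auto
  ultimately show ?thesis by (simp add: card_image)
qed

lemma class0_power_eq_one: "x \<in> C 0 \<Longrightarrow> x ^ (2 * r) = 1"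
proof -
  assume "x \<in> C 0"
  then obtain j where "x = \<rho> ^ (3 * j)" unfolding class_eq by auto
  then have "x ^ (2 * r) = (\<rho> ^ (6 * r)) ^ j"
    by (simp add: power_mult[symmetric] ac_simps)
  then show ?thesis using power_CARD_minus_one[OF rho_nonzero] CARD_eq by simp
qed

definition succ_set :: "nat \<Rightarrow> nat \<Rightarrow> 'a set" where
  "succ_set i j = {x \<in> C i. x + 1 \<in> C j}"

lemma cyc_num3_eq_card_succ_set: "cyc_num3 \<rho> i j = card (succ_set i j)"
proof -
  have "(\<lambda>x. x + 1) ` C i \<inter> C j = (\<lambda>x. x + 1) ` succ_set i j"
    unfolding succ_set_def by auto
  then show ?thesis unfolding cyc_num3_def by (simp add: card_image)
qed

lemma reflect_mem_succ_set:
  assumes "i < 3" "j < 3" "x \<in> succ_set i j"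
  shows "-1 - x \<in> succ_set j i"
proof -
  have "-1 - x = - (x + 1)" "-1 - x + 1 = - x" by simp_all
  moreover have "x \<in> C i" "x + 1 \<in> C j" using assms(3) unfolding succ_set_def by auto
  then have "- (x + 1) \<in> C j" "- x \<in> C i" using class_uminus assms(1,2) by blast+
  ultimately show ?thesis unfolding succ_set_def by (simp only: mem_Collect_eq)
qed

lemma card_succ_set_swap:
  assumes "i < 3" "j < 3"
  shows "card (succ_set i j) = card (succ_set j i)"
proof (rule card_eq_if_involution_swaps[where f = "\<lambda>x. -1 - x"])
  show "(\<lambda>x. -1 - x) ` succ_set i j \<subseteq> succ_set j i"
    using reflect_mem_succ_set[OF assms] by blast
  show "(\<lambda>x. -1 - x) ` succ_set j i \<subseteq> succ_set i j"
    using reflect_mem_succ_set[OF assms(2,1)] by blast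
qed simp

lemma inverse_mem_succ_set:
  assumes "i < 3" "j < 3" "x \<in> succ_set i j"
  shows "inverse x \<in> succ_set ((3 - i) mod 3) ((j + 3 - i) mod 3)"
proof -
  have x: "x \<in> C i" "x + 1 \<in> C j" "x \<noteq> 0"
    using assms(3) class_nonzero unfolding succ_set_def by auto
  have "inverse x + 1 = (x + 1) * inverse x" using x(3) by (simp add: field_simps)
  moreover have "(x + 1) * inverse x \<in> C ((j + 3 - i) mod 3)"
    using class_mult[OF assms(2) _ x(2) class_inverse[OF assms(1) x(1)]] assms(1,2)
    by (simp add: mod_add_right_eq)
  ultimately show ?thesis using class_inverse[OF assms(1) x(1)] unfolding succ_set_def by simp
qed

lemma card_succ_set_11_eq_20: "card (succ_set 1 1) = card (succ_set 2 0)"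
  by (rule card_eq_if_involution_swaps[where f = inverse])
     (use inverse_mem_succ_set[of 1 1] inverse_mem_succ_set[of 2 0] in auto)

lemma sum_card_succ_set:
  assumes "i < 3"
  shows "card (succ_set i 0) + card (succ_set i 1) + card (succ_set i 2) = card (C i - {-1})"
proof -
  have "C i - {-1} = succ_set i 0 \<union> succ_set i 1 \<union> succ_set i 2"
  proof
    show "C i - {-1} \<subseteq> succ_set i 0 \<union> succ_set i 1 \<union> succ_set i 2"
    proof
      fix x assume x: "x \<in> C i - {-1}"
      then have "x + 1 \<noteq> 0" by (simp add: eq_neg_iff_add_eq_0)
      then obtain j where "j < 3" "x + 1 \<in> C j" using class_exists by blast
      moreover have "j = 0 \<or> j = 1 \<or> j = 2" using \<open>j < 3\<close> by auto
      ultimately show "x \<in> succ_set i 0 \<union> succ_set i 1 \<union> succ_set i 2"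
        using x unfolding succ_set_def by auto
    qed
    show "succ_set i 0 \<union> succ_set i 1 \<union> succ_set i 2 \<subseteq> C i - {-1}"
      using class_nonzero unfolding succ_set_def by (force simp: eq_neg_iff_add_eq_0)
  qed
  moreover have "succ_set i j \<inter> succ_set i k = {}" if "j < 3" "k < 3" "j \<noteq> k" for j k
    using class_unique that unfolding succ_set_def by blast
  ultimately show ?thesis
    by (simp add: card_Un_disjoint Int_Un_distrib2)
qed

lemma card_succ_set_12: "card (succ_set 1 2) = card (succ_set 0 0) + 1"
proof -
  have "-1 \<notin> C 1" using minus_one_in_class0 class_unique[of 0 1] by auto
  then have "card (succ_set 1 0) + card (succ_set 1 1) + card (succ_set 1 2) = 2 * r"
    using sum_card_succ_set[of 1] card_class[of 1] by simp
  moreover have "card (succ_set 0 0) + card (succ_set 0 1) + card (succ_set 0 2) = 2 * r - 1"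
    using sum_card_succ_set[of 0] card_class[of 0] minus_one_in_class0 by simp
  ultimately show ?thesis
    using r_pos card_succ_set_swap[of 1 0] card_succ_set_swap[of 2 0] card_succ_set_11_eq_20
    by simp
qed

lemma even_card_succ_set_00:
  assumes "2 \<notin> C 0"
  shows "even (card (succ_set 0 0))"
proof (rule even_card_if_fixpoint_free_involution[where g = "\<lambda>x. -1 - x"])
  show "\<forall>x\<in>succ_set 0 0. -1 - x \<in> succ_set 0 0 \<and> -1 - (-1 - x) = x \<and> -1 - x \<noteq> x"
  proof
    fix x assume x: "x \<in> succ_set 0 0"
    then have x0: "x \<in> C 0" "x \<noteq> 0" using class_nonzero unfolding succ_set_def by auto
    have "-1 - x \<noteq> x"
    proof
      assume "-1 - x = x"
      then have "2 = - inverse x" using x0(2) by (simp add: field_simps)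
      then show False
        using assms class_uminus[OF _ class_inverse[OF _ x0(1)]] by simp
    qed
    then show "-1 - x \<in> succ_set 0 0 \<and> -1 - (-1 - x) = x \<and> -1 - x \<noteq> x"
      using reflect_mem_succ_set[of 0 0 x] x by simp
  qed
qed simp

lemma odd_cyc_num3_12: "2 \<notin> C 0 \<Longrightarrow> odd (cyc_num3 \<rho> 1 2)"
  using even_card_succ_set_00 card_succ_set_12 cyc_num3_eq_card_succ_set by simp

end

lemma ord_dvd_if_power_eq_one_in_field:
  assumes "prime p" "CARD('a::{finite,field}) = p ^ a" "b > 0" "(of_nat b :: 'a) ^ m = 1"
  shows "ord p b dvd m"
proof -
  have "of_nat (b ^ m - 1) = (0::'a)"
    using assms(3,4) by simp
  then have "p dvd b ^ m - 1"
    using of_nat_eq_0_iff_char_dvd CHAR_eq_if_CARD_eq_prime_power[OF assms(1,2)] by metis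
  then have "[b ^ m = 1] (mod p)" using assms(3) by (simp add: cong_altdef_nat)
  then show ?thesis by (simp add: ord_divides')
qed

theorem corollary3p8:
  fixes p a :: nat and \<rho> :: "'a::{finite,field}"
  assumes "prime p" and "odd p"
    and "ord (3 * ord p 2) p > 1"
    and "\<not> ord (3 * ord p 2) p dvd a"
    and "CARD('a) = p ^ a"
    and "[p ^ a = 1] (mod 6)"
    and "primitive_element \<rho>"
  shows "odd (cyc_num3 \<rho> 1 2)"
proof -
  have "p ^ a \<ge> 1" using prime_gt_0_nat[OF assms(1)] by simp
  then obtain r where r: "p ^ a - 1 = 6 * r" using assms(6) by (auto simp: cong_altdef_nat)
  then interpret cubic_classes \<rho> r using assms(5,7) \<open>p ^ a \<ge> 1\<close> by unfold_locales simp_all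
  have "2 \<notin> C 0"
  proof
    assume "2 \<in> C 0"
    then have "(of_nat 2 :: 'a) ^ (2 * r) = 1" using class0_power_eq_one by simp
    then have "ord p 2 dvd 2 * r" using ord_dvd_if_power_eq_one_in_field[OF assms(1,5)] by simp
    then have "3 * ord p 2 dvd p ^ a - 1" using r by simp
    then have "[p ^ a = 1] (mod 3 * ord p 2)"
      using \<open>p ^ a \<ge> 1\<close> by (simp add: cong_altdef_nat)
    then have "ord (3 * ord p 2) p dvd a" by (simp add: ord_divides')
    then show False using assms(4) by simp
  qed
  then show ?thesis by (rule odd_cyc_num3_12)
qed

end
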